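(* Let $H$ be an acyclic simple digraph, let $k$ be a positive integer, and let $T$ be a tournament that does not contain $k$ pairwise vertex-disjoint topological minor copies of $H$. Then there is a set $X$ of at most $2^{|V(H)|}k$ vertices of $T$ such that $T-X$ does not contain $H$ as a topological minor.
   Context: A tournament is a simple digraph with exactly one arc between every pair of distinct vertices. A topological minor copy of $H$ in a digraph $G$ is a subgraph $\widehat H$ of $G$ with a map sending vertices of $H$ to distinct vertices of $\widehat H$ and arcs $(u,v)$ of $H$ to directed paths from the image of $u$ to the image of $v$ that are internally vertex-disjoint, contain no image of a vertex of $H$ as an internal vertex, and together cover every arc and every non-image vertex of $\widehat H$ exactly once; $G$ contains $H$ as a topological minor if it has such a subgraph. $T-X$ is the subtournament induced by $V(T)\setminus X$. *)

theory Defs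
  imports Main
begin

definition simple_digraph :: "'a set \<Rightarrow> ('a \<times> 'a) set \<Rightarrow> bool" where
  "simple_digraph V A \<longleftrightarrow> finite V \<and> A \<subseteq> V \<times> V \<and> (\<forall>v. (v, v) \<notin> A)"

definition acyclic_digraph :: "'a set \<Rightarrow> ('a \<times> 'a) set \<Rightarrow> bool" where
  "acyclic_digraph V A \<longleftrightarrow> (\<forall>v. (v, v) \<notin> A\<^sup>+)"

definition tournament :: "'a set \<Rightarrow> ('a \<times> 'a) set \<Rightarrow> bool" where
  "tournament V A \<longleftrightarrow> simple_digraph V A \<and>
     (\<forall>u\<in>V. \<forall>v\<in>V. u \<noteq> v \<longrightarrow> ((u, v) \<in> A \<longleftrightarrow> (v, u) \<notin> A))"

definition dipath :: "'a set \<Rightarrow> ('a \<times> 'a) set \<Rightarrow> 'a list \<Rightarrow> 'a \<Rightarrow> 'a \<Rightarrow> bool" where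
  "dipath V A ps x y \<longleftrightarrow> ps \<noteq> [] \<and> distinct ps \<and> set ps \<subseteq> V \<and> hd ps = x \<and> last ps = y \<and>
     (\<forall>i. Suc i < length ps \<longrightarrow> (ps ! i, ps ! Suc i) \<in> A)"

definition internal :: "'a list \<Rightarrow> 'a set" where
  "internal ps = set (butlast (tl ps))"

text \<open>A topological minor copy of H = (VH, AH) in G = (V, A): an injective branch map f and,
  for every arc e of H, a directed path P e between the images of its ends; the paths are
  internally vertex-disjoint and avoid branch vertices internally.\<close>
definition tm_copy ::
  "'a set \<Rightarrow> ('a \<times> 'a) set \<Rightarrow> 'b set \<Rightarrow> ('b \<times> 'b) set \<Rightarrow> ('b \<Rightarrow> 'a) \<Rightarrow> ('b \<times> 'b \<Rightarrow> 'a list) \<Rightarrow> bool" where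
  "tm_copy V A VH AH f P \<longleftrightarrow>
     inj_on f VH \<and> f ` VH \<subseteq> V \<and>
     (\<forall>(u, v)\<in>AH. dipath V A (P (u, v)) (f u) (f v)) \<and>
     (\<forall>e\<in>AH. internal (P e) \<inter> f ` VH = {}) \<and>
     (\<forall>e\<in>AH. \<forall>e'\<in>AH. e \<noteq> e' \<longrightarrow> internal (P e) \<inter> internal (P e') = {})"

definition tm_verts :: "'b set \<Rightarrow> ('b \<times> 'b) set \<Rightarrow> ('b \<Rightarrow> 'a) \<Rightarrow> ('b \<times> 'b \<Rightarrow> 'a list) \<Rightarrow> 'a set" where
  "tm_verts VH AH f P = f ` VH \<union> (\<Union>e\<in>AH. set (P e))"

definition contains_tm :: "'a set \<Rightarrow> ('a \<times> 'a) set \<Rightarrow> 'b set \<Rightarrow> ('b \<times> 'b) set \<Rightarrow> bool" where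
  "contains_tm V A VH AH \<longleftrightarrow> (\<exists>f P. tm_copy V A VH AH f P)"

definition contains_k_disjoint_tm ::
  "nat \<Rightarrow> 'a set \<Rightarrow> ('a \<times> 'a) set \<Rightarrow> 'b set \<Rightarrow> ('b \<times> 'b) set \<Rightarrow> bool" where
  "contains_k_disjoint_tm k V A VH AH \<longleftrightarrow>
     (\<exists>F :: nat \<Rightarrow> 'b \<Rightarrow> 'a. \<exists>P :: nat \<Rightarrow> 'b \<times> 'b \<Rightarrow> 'a list.
        (\<forall>i<k. tm_copy V A VH AH (F i) (P i)) \<and>
        (\<forall>i<k. \<forall>j<k. i \<noteq> j \<longrightarrow> tm_verts VH AH (F i) (P i) \<inter> tm_verts VH AH (F j) (P j) = {}))"

definition del_verts :: "('a \<times> 'a) set \<Rightarrow> 'a set \<Rightarrow> ('a \<times> 'a) set" where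
  "del_verts A X = {(u, v) \<in> A. u \<notin> X \<and> v \<notin> X}"

end

theory Submission
  imports Defs
begin

text \<open>Every tournament on at least \<open>2^(n-1)\<close> vertices contains every acyclic digraph \<open>H\<close> on
  \<open>n \<ge> 1\<close> vertices as a subgraph: send a source of \<open>H\<close> to some vertex \<open>w\<close> and embed the rest,
  by induction, into the out-neighbourhood of \<open>w\<close>, which has at least \<open>2^(n-2)\<close> vertices unless
  the in-neighbourhood has; in that case argue in the converse digraphs, where a sink of \<open>H\<close>
  becomes a source. Greedily, a tournament on at least \<open>2^n k\<close> vertices then contains \<open>k\<close>
  disjoint copies of \<open>H\<close>, and a subgraph copy is a topological minor copy whose paths are single
  arcs. Hence a tournament without \<open>k\<close> disjoint copies has fewer than \<open>2^n k\<close> vertices, and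
  \<open>X = V(T)\<close> works.\<close>

lemma acyclic_obtain_source:
  assumes "finite V" "G \<subseteq> V \<times> V" "acyclic G" "V \<noteq> {}"
  obtains s where "s \<in> V" "\<forall>u. (u, s) \<notin> G"
proof -
  have "wf G"
    using assms(1-3) finite_acyclic_wf finite_subset by blast
  moreover obtain v where "v \<in> V"
    using assms(4) by blast
  ultimately obtain s where "s \<in> V" "\<And>u. (u, s) \<in> G \<Longrightarrow> u \<notin> V"
    by (rule wfE_min) blast
  with assms(2) show thesis
    using that by blast
qed

lemma map_prod_image_converse: "map_prod f f ` (R\<inverse>) = (map_prod f f ` R)\<inverse>"
  by auto

lemma tournament_converse:
  assumes "tournament V A"
  shows "tournament V (A\<inverse>)"
  using assms unfolding tournament_def simple_digraph_def converse_iff by blast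

lemma tournament_out_or_in_half:
  assumes "tournament V A" "W \<subseteq> V" "w \<in> W" "2 * m \<le> card W"
  shows "m \<le> card {x \<in> W. (w, x) \<in> A} \<or> m \<le> card {x \<in> W. (x, w) \<in> A}"
proof -
  have "finite W"
    using assms(1,2) finite_subset unfolding tournament_def simple_digraph_def by blast
  have "W - {w} \<subseteq> {x \<in> W. (w, x) \<in> A} \<union> {x \<in> W. (x, w) \<in> A}"
    using assms(1-3) unfolding tournament_def by blast
  then have "card (W - {w}) \<le> card ({x \<in> W. (w, x) \<in> A} \<union> {x \<in> W. (x, w) \<in> A})"
    using \<open>finite W\<close> by (intro card_mono) auto
  also have "\<dots> \<le> card {x \<in> W. (w, x) \<in> A} + card {x \<in> W. (x, w) \<in> A}"
    by (rule card_Un_le)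
  finally have "card W - 1 \<le> card {x \<in> W. (w, x) \<in> A} + card {x \<in> W. (x, w) \<in> A}"
    using \<open>finite W\<close> assms(3) by simp
  moreover have "card W > 0"
    using \<open>finite W\<close> assms(3) card_gt_0_iff by blast
  ultimately show ?thesis
    using assms(4) by linarith
qed

lemma embedding_extend_source:
  assumes "G \<subseteq> V \<times> V" "s \<in> V" "\<forall>u. (u, s) \<notin> G" "(w, w) \<notin> A"
    and "inj_on f (V - {s})" "f ` (V - {s}) \<subseteq> {x. (w, x) \<in> A}"
    and "map_prod f f ` Restr G (V - {s}) \<subseteq> A"
  shows "inj_on (f(s := w)) V" and "map_prod (f(s := w)) (f(s := w)) ` G \<subseteq> A"
proof -
  have "inj_on (f(s := w)) (insert s (V - {s}))"
    using assms(4-6) by (auto simp: inj_on_def)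
  then show "inj_on (f(s := w)) V"
    using insert_Diff[OF assms(2)] by simp
  show "map_prod (f(s := w)) (f(s := w)) ` G \<subseteq> A"
  proof (rule image_subsetI)
    fix e
    assume "e \<in> G"
    then obtain u v where e: "e = (u, v)" "(u, v) \<in> G"
      by (cases e) auto
    have v: "v \<in> V - {s}"
      using e(2) assms(1,3) by blast
    show "map_prod (f(s := w)) (f(s := w)) e \<in> A"
    proof (cases "u = s")
      case True
      then show ?thesis
        using e(1) v assms(6) by auto
    next
      case False
      then have "(u, v) \<in> Restr G (V - {s})"
        using e(2) v assms(1) by blast
      then have "(f u, f v) \<in> A"
        using assms(7) by force
      then show ?thesis
        using e(1) v False by simp
    qed
  qed
qed

lemma embedding_via_source:
  assumes "(w, w) \<notin> A" "w \<in> W"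
    and "finite VH" "G \<subseteq> VH \<times> VH" "acyclic G" "VH \<noteq> {}"
    and "\<And>s. s \<in> VH \<Longrightarrow> \<exists>f. inj_on f (VH - {s}) \<and> f ` (VH - {s}) \<subseteq> {x \<in> W. (w, x) \<in> A} \<and>
      map_prod f f ` Restr G (VH - {s}) \<subseteq> A"
  shows "\<exists>f. inj_on f VH \<and> f ` VH \<subseteq> W \<and> map_prod f f ` G \<subseteq> A"
proof -
  obtain s where s: "s \<in> VH" "\<forall>u. (u, s) \<notin> G"
    using acyclic_obtain_source[OF assms(3-6)] by blast
  then obtain f where f: "inj_on f (VH - {s})" "f ` (VH - {s}) \<subseteq> {x \<in> W. (w, x) \<in> A}"
      "map_prod f f ` Restr G (VH - {s}) \<subseteq> A"
    using assms(7) by blast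
  then have "inj_on (f(s := w)) VH" "map_prod (f(s := w)) (f(s := w)) ` G \<subseteq> A"
    using embedding_extend_source[OF assms(4) s assms(1) f(1) _ f(3)] by blast+
  moreover have "(f(s := w)) ` VH \<subseteq> W"
    using f(2) assms(2) by auto
  ultimately show ?thesis
    by blast
qed

theorem tournament_embeds_acyclic:
  assumes "tournament V A" "W \<subseteq> V"
    and "finite VH" "AH \<subseteq> VH \<times> VH" "acyclic AH"
    and "2 ^ (card VH - 1) \<le> card W"
  shows "\<exists>f. inj_on f VH \<and> f ` VH \<subseteq> W \<and> map_prod f f ` AH \<subseteq> A"
  using assms
proof (induction "card VH" arbitrary: VH AH A W rule: less_induct)
  case less
  show ?case
  proof (cases "VH = {}")
    case True
    then show ?thesis
      using less.prems(4) by simp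
  next
    case False
    then obtain n where n: "card VH = Suc n"
      using less.prems(3) by (metis card_gt_0_iff gr0_implies_Suc)
    obtain w where w: "w \<in> W"
      using less.prems(6) by fastforce
    let ?out = "\<lambda>B. {x \<in> W. (w, x) \<in> B}"
    have embed_via_source: "\<exists>f. inj_on f VH \<and> f ` VH \<subseteq> W \<and> map_prod f f ` G \<subseteq> B"
      if B: "tournament V B" and G: "G \<subseteq> VH \<times> VH" "acyclic G"
        and big: "n = 0 \<or> 2 ^ (n - 1) \<le> card (?out B)" for B G
    proof (rule embedding_via_source[OF _ w less.prems(3) G False])
      show "(w, w) \<notin> B"
        using B unfolding tournament_def simple_digraph_def by blast
    next
      fix s
      assume "s \<in> VH"
      then have card: "card (VH - {s}) = n"
        using less.prems(3) n by simp
      show "\<exists>f. inj_on f (VH - {s}) \<and> f ` (VH - {s}) \<subseteq> ?out B \<and>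
          map_prod f f ` Restr G (VH - {s}) \<subseteq> B"
      proof (cases "n = 0")
        case True
        then have empty: "VH - {s} = {}"
          using card less.prems(3) by simp
        show ?thesis
          unfolding empty by simp
      next
        case False
        show ?thesis
        proof (rule less.hyps)
          show "card (VH - {s}) < card VH" "finite (VH - {s})"
            using card n less.prems(3) by auto
          show "2 ^ (card (VH - {s}) - 1) \<le> card (?out B)"
            using card big False by simp
          show "Restr G (VH - {s}) \<subseteq> (VH - {s}) \<times> (VH - {s})" "acyclic (Restr G (VH - {s}))"
            using G(2) by (auto intro: acyclic_subset)
        qed (use B less.prems(2) in auto)
      qed
    qed
    consider "n = 0 \<or> 2 ^ (n - 1) \<le> card (?out A)" | "2 ^ (n - 1) \<le> card (?out (A\<inverse>))"
    proof (cases n)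
      case (Suc m)
      then have "2 * 2 ^ m \<le> card W"
        using less.prems(6) n by simp
      then show thesis
        using tournament_out_or_in_half[OF less.prems(1,2) w] that Suc by auto
    qed (use that in simp)
    then show ?thesis
    proof cases
      case 1
      then show ?thesis
        using embed_via_source less.prems(1,4,5) by blast
    next
      case 2
      have "tournament V (A\<inverse>)" "AH\<inverse> \<subseteq> VH \<times> VH" "acyclic (AH\<inverse>)"
        using tournament_converse less.prems(1,4,5) by (auto simp: acyclic_converse)
      then obtain f where "inj_on f VH" "f ` VH \<subseteq> W" "map_prod f f ` (AH\<inverse>) \<subseteq> A\<inverse>"
        using embed_via_source[of "A\<inverse>" "AH\<inverse>"] 2 by blast
      then show ?thesis
        by (auto simp: map_prod_image_converse)
    qed
  qed
qed

lemma tournament_disjoint_embeddings: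
  assumes "tournament V A" "finite VH" "AH \<subseteq> VH \<times> VH" "acyclic AH"
  shows "W \<subseteq> V \<Longrightarrow> k * 2 ^ card VH \<le> card W \<Longrightarrow>
    \<exists>F. (\<forall>i<k. inj_on (F i) VH \<and> F i ` VH \<subseteq> W \<and> map_prod (F i) (F i) ` AH \<subseteq> A) \<and>
        (\<forall>i<k. \<forall>j<k. i \<noteq> j \<longrightarrow> F i ` VH \<inter> F j ` VH = {})"
proof (induction k arbitrary: W)
  case 0
  then show ?case
    by simp
next
  case (Suc k)
  have "2 ^ (card VH - 1) \<le> (2::nat) ^ card VH"
    by (simp add: power_increasing)
  also have "\<dots> \<le> card W"
    using Suc.prems(2) by simp
  finally obtain f where f: "inj_on f VH" "f ` VH \<subseteq> W" "map_prod f f ` AH \<subseteq> A"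
    using tournament_embeds_acyclic[OF assms(1) Suc.prems(1) assms(2-4)] by blast
  define W' where "W' = W - f ` VH"
  have "finite W"
    using Suc.prems(1) assms(1) finite_subset unfolding tournament_def simple_digraph_def by blast
  moreover have "card (f ` VH) = card VH"
    using f(1) by (rule card_image)
  ultimately have "card W' = card W - card VH"
    using f(2) unfolding W'_def by (metis card_Diff_subset finite_subset)
  then have "k * 2 ^ card VH \<le> card W'"
    using Suc.prems(2) less_exp[of "card VH"] unfolding mult_Suc by linarith
  moreover have "W' \<subseteq> V"
    using Suc.prems(1) unfolding W'_def by blast
  ultimately obtain F where F:
      "\<forall>i<k. inj_on (F i) VH \<and> F i ` VH \<subseteq> W' \<and> map_prod (F i) (F i) ` AH \<subseteq> A"
      "\<forall>i<k. \<forall>j<k. i \<noteq> j \<longrightarrow> F i ` VH \<inter> F j ` VH = {}"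
    using Suc.IH by metis
  define G where "G = F(k := f)"
  have "inj_on (G i) VH \<and> G i ` VH \<subseteq> W \<and> map_prod (G i) (G i) ` AH \<subseteq> A"
    if "i < Suc k" for i
  proof (cases "i = k")
    case True
    then show ?thesis
      using f unfolding G_def by simp
  next
    case False
    then have "i < k"
      using that by simp
    then show ?thesis
      using F(1) False unfolding G_def W'_def by auto
  qed
  moreover have "G i ` VH \<inter> G j ` VH = {}"
    if ij: "i < Suc k" "j < Suc k" "i \<noteq> j" for i j
  proof -
    have new: "F i' ` VH \<inter> f ` VH = {}" if "i' < k" for i'
      using F(1) that unfolding W'_def by blast
    consider (old) "i < k" "j < k" | (new_i) "i = k" "j < k" | (new_j) "j = k" "i < k"
      using ij unfolding less_Suc_eq by blast
    then show ?thesis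
    proof cases
      case old
      then show ?thesis
        using F(2) ij(3) unfolding G_def by simp
    next
      case new_i
      then show ?thesis
        using new[of j] unfolding G_def by (simp add: Int_commute)
    next
      case new_j
      then show ?thesis
        using new[of i] unfolding G_def by simp
    qed
  qed
  ultimately show ?case
    by (intro exI[of _ G]) blast
qed

lemma tm_copy_of_embedding:
  assumes "simple_digraph VH AH" "inj_on f VH" "f ` VH \<subseteq> V" "map_prod f f ` AH \<subseteq> A"
  shows "tm_copy V A VH AH f (\<lambda>e. [f (fst e), f (snd e)])"
    and "tm_verts VH AH f (\<lambda>e. [f (fst e), f (snd e)]) = f ` VH"
proof -
  have AH: "AH \<subseteq> VH \<times> VH" "\<forall>v. (v, v) \<notin> AH"
    using assms(1) unfolding simple_digraph_def by auto
  have "dipath V A [f u, f v] (f u) (f v)" if "(u, v) \<in> AH" for u v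
  proof -
    have "u \<in> VH" "v \<in> VH" "u \<noteq> v"
      using that AH by auto
    then have "f u \<noteq> f v"
      using assms(2) by (simp add: inj_on_eq_iff)
    moreover have "(f u, f v) \<in> A"
      using that assms(4) by force
    ultimately show ?thesis
      using \<open>u \<in> VH\<close> \<open>v \<in> VH\<close> assms(3) unfolding dipath_def by (auto simp: less_Suc_eq)
  qed
  then show "tm_copy V A VH AH f (\<lambda>e. [f (fst e), f (snd e)])"
    using assms(2,3) unfolding tm_copy_def internal_def by auto
  show "tm_verts VH AH f (\<lambda>e. [f (fst e), f (snd e)]) = f ` VH"
    using AH(1) unfolding tm_verts_def by auto
qed

lemma tournament_contains_k_disjoint_tm:
  assumes "tournament V A" "simple_digraph VH AH" "acyclic_digraph VH AH"
    and "k * 2 ^ card VH \<le> card V"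
  shows "contains_k_disjoint_tm k V A VH AH"
proof -
  have H: "finite VH" "AH \<subseteq> VH \<times> VH" "acyclic AH"
    using assms(2,3) unfolding simple_digraph_def by (simp_all add: acyclic_def acyclic_digraph_def)
  obtain F where F:
      "\<forall>i<k. inj_on (F i) VH \<and> F i ` VH \<subseteq> V \<and> map_prod (F i) (F i) ` AH \<subseteq> A"
      "\<forall>i<k. \<forall>j<k. i \<noteq> j \<longrightarrow> F i ` VH \<inter> F j ` VH = {}"
    using tournament_disjoint_embeddings[OF assms(1) H subset_refl assms(4)] by metis
  define P where "P i e = [F i (fst e), F i (snd e)]" for i e
  have "tm_copy V A VH AH (F i) (P i)" if "i < k" for i
    unfolding P_def using F(1) that by (intro tm_copy_of_embedding(1)[OF assms(2)]) auto
  moreover have "tm_verts VH AH (F i) (P i) = F i ` VH" if "i < k" for i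
    unfolding P_def using F(1) that by (intro tm_copy_of_embedding(2)[OF assms(2)]) auto
  ultimately show ?thesis
    unfolding contains_k_disjoint_tm_def using F(2) by (intro exI[of _ F] exI[of _ P]) simp
qed

theorem corollary20:
  fixes VT :: "'a set" and AT :: "('a \<times> 'a) set"
    and VH :: "'b set" and AH :: "('b \<times> 'b) set" and k :: nat
  assumes "simple_digraph VH AH" and "acyclic_digraph VH AH"
    and "k > 0"
    and "tournament VT AT"
    and "\<not> contains_k_disjoint_tm k VT AT VH AH"
  shows "\<exists>X. X \<subseteq> VT \<and> card X \<le> 2 ^ card VH * k \<and>
           \<not> contains_tm (VT - X) (del_verts AT X) VH AH"
proof (cases "VH = {}")
  case True
  then have "AH = {}"
    using assms(1) unfolding simple_digraph_def by blast
  then have "contains_k_disjoint_tm k VT AT VH AH"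
    using True unfolding contains_k_disjoint_tm_def tm_copy_def tm_verts_def by simp
  with assms(5) show ?thesis
    by blast
next
  case False
  have "card VT < k * 2 ^ card VH"
    using tournament_contains_k_disjoint_tm[OF assms(4,1,2)] assms(5) by (meson not_less)
  moreover have "\<not> contains_tm {} (del_verts AT VT) VH AH"
    using False unfolding contains_tm_def tm_copy_def by auto
  ultimately show ?thesis
    by (intro exI[of _ VT]) (simp add: mult.commute)
qed

end
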